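(* Let $\Lambda,\hat x,\mathcal R,V$ be as in the context and let $[u]\in\dot{\mathcal H}^1$ satisfy $u(L_\Lambda x)=u(x)$ for all $x\in\Lambda$. Let $f_u=-\mathrm{div}_{\mathcal R}(\nabla^2V(0)[D_{\mathcal R}u])$. Then, provided the respective sums converge absolutely, $$\sum_{x\in\Lambda}f_u(x)=0,\qquad\sum_{x\in\Lambda}f_u(x)\,x=0,\qquad\sum_{x\in\Lambda}f_u(x)\,x\otimes x=c\,\mathrm{Id}\ \text{ for some }c\in\mathbb{R}.$$
   Context: $\Lambda=A_\Lambda\mathbb{Z}^2$ is the square lattice ($A_\Lambda=\mathrm{Id}$) or triangular lattice ($A_\Lambda=\begin{pmatrix}1&\frac12\\0&\frac{\sqrt3}{2}\end{pmatrix}$); $Q_\Lambda$ is the rotation through $\pi/2$ (square) or $2\pi/3$ (triangular). $\hat x\in\mathbb{R}^2\setminus\Lambda$ is the centre of a unit square with vertices in $\Lambda$ (square) or the centroid of an equilateral triangle of side $1$ with vertices in $\Lambda$ (triangular), and $L_\Lambda x=Q_\Lambda(x-\hat x)+\hat x$ (so $L_\Lambda\Lambda=\Lambda$). $\mathcal R\subset\Lambda\setminus\{0\}$ is finite with $\mathrm{span}_\mathbb{Z}\mathcal R=\Lambda$ and $Q_\Lambda\mathcal R=\mathcal R$. $V\in C^6(\mathbb{R}^{\mathcal R},\mathbb{R})$ with $V(A)=V((A_{Q_\Lambda\rho})_{\rho\in\mathcal R})$, periodic with minimal period $p>0$ in each component, and lattice stable ($\exists c_0>0$: $\sum_x\sum_{\rho,\sigma}\nabla^2V(0)_{\rho\sigma}D_\rho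 vD_\sigma v\ge c_0\|D_{\mathcal R}v\|^2_{\ell^2}$ for all $v\in\dot{\mathcal H}^1$). $D_\rho u(x)=u(x+\rho)-u(x)$, $D_{\mathcal R}u=(D_\rho u)_{\rho\in\mathcal R}$, $\mathrm{div}_{\mathcal R}g(x)=-\sum_\rho(g_\rho(x-\rho)-g_\rho(x))$, and $\dot{\mathcal H}^1=\{u:\Lambda\to\mathbb{R}:D_{\mathcal R}u\in\ell^2(\Lambda)\}/\mathbb{R}$. *)

theory Defs
  imports "HOL-Analysis.Analysis"
begin

definition vec2 :: "real \<Rightarrow> real \<Rightarrow> real^2" where
  "vec2 a b = (\<chi> i. if i = 1 then a else b)"

datatype lattice_kind = Square | Triangular

definition lat_mat :: "lattice_kind \<Rightarrow> real^2^2" where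
  "lat_mat k = (case k of
      Square \<Rightarrow> mat 1
    | Triangular \<Rightarrow> (\<chi> i j. if i = 1 then (if j = 1 then 1 else 1/2)
                          else (if j = 1 then 0 else sqrt 3 / 2)))"

definition lattice :: "lattice_kind \<Rightarrow> (real^2) set" where
  "lattice k = {lat_mat k *v vec2 (of_int a) (of_int b) | a b :: int. True}"

definition rot :: "real \<Rightarrow> real^2^2" where
  "rot \<theta> = (\<chi> i j. if i = 1 then (if j = 1 then cos \<theta> else - sin \<theta>)
                     else (if j = 1 then sin \<theta> else cos \<theta>))"

definition lat_rot :: "lattice_kind \<Rightarrow> real^2^2" where
  "lat_rot k = (case k of Square \<Rightarrow> rot (pi/2) | Triangular \<Rightarrow> rot (2*pi/3))"

definition admissible_centre :: "lattice_kind \<Rightarrow> real^2 \<Rightarrow> bool" where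
  "admissible_centre k xh = (case k of
      Square \<Rightarrow> (\<exists>z v w. norm v = 1 \<and> norm w = 1 \<and> v \<bullet> w = 0 \<and>
                  z \<in> lattice k \<and> z + v \<in> lattice k \<and> z + w \<in> lattice k \<and>
                  z + v + w \<in> lattice k \<and> xh = z + (1/2) *\<^sub>R (v + w))
    | Triangular \<Rightarrow> (\<exists>a b c. a \<in> lattice k \<and> b \<in> lattice k \<and> c \<in> lattice k \<and>
                  dist a b = 1 \<and> dist b c = 1 \<and> dist a c = 1 \<and>
                  xh = (1/3) *\<^sub>R (a + b + c)))"

definition lat_L :: "lattice_kind \<Rightarrow> real^2 \<Rightarrow> real^2 \<Rightarrow> real^2" where
  "lat_L k xh x = lat_rot k *v (x - xh) + xh"

fun C_k :: "nat \<Rightarrow> ('a::real_normed_vector \<Rightarrow> real) \<Rightarrow> bool" where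
  "C_k 0 f = continuous_on UNIV f"
| "C_k (Suc n) f = (f differentiable_on UNIV \<and>
        (\<forall>v. C_k n (\<lambda>x. frechet_derivative f (at x) v)))"

text \<open>Hessian entry (nabla^2 V(0))_{rho sigma} of V : R^R -> R, R indexed by 'r.\<close>
definition hess0 :: "(real^'r::finite \<Rightarrow> real) \<Rightarrow> 'r \<Rightarrow> 'r \<Rightarrow> real" where
  "hess0 V r s = frechet_derivative
      (\<lambda>A. frechet_derivative V (at A) (axis s 1)) (at 0) (axis r 1)"

definition Dfd :: "(real^2 \<Rightarrow> real) \<Rightarrow> real^2 \<Rightarrow> real^2 \<Rightarrow> real" where
  "Dfd u \<rho> x = u (x + \<rho>) - u x"

definition divR :: "('r::finite \<Rightarrow> real^2) \<Rightarrow> ('r \<Rightarrow> real^2 \<Rightarrow> real) \<Rightarrow> real^2 \<Rightarrow> real" where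
  "divR \<rho> g x = - (\<Sum>r\<in>UNIV. g r (x - \<rho> r) - g r x)"

definition force :: "(real^'r::finite \<Rightarrow> real) \<Rightarrow> ('r \<Rightarrow> real^2) \<Rightarrow> (real^2 \<Rightarrow> real)
    \<Rightarrow> real^2 \<Rightarrow> real" where
  "force V \<rho> u = (\<lambda>x. - divR \<rho> (\<lambda>r y. \<Sum>s\<in>UNIV. hess0 V r s * Dfd u (\<rho> s) y) x)"

text \<open>u in dot H^1 (as representative): D_R u in l^2(Lambda).\<close>
definition in_H1 :: "(real^2) set \<Rightarrow> ('r::finite \<Rightarrow> real^2) \<Rightarrow> (real^2 \<Rightarrow> real) \<Rightarrow> bool" where
  "in_H1 \<Lambda> \<rho> u = (\<forall>r. (\<lambda>x. (Dfd u (\<rho> r) x)\<^sup>2) summable_on \<Lambda>)"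

definition lattice_stable :: "(real^2) set \<Rightarrow> ('r::finite \<Rightarrow> real^2) \<Rightarrow> (real^'r \<Rightarrow> real) \<Rightarrow> bool" where
  "lattice_stable \<Lambda> \<rho> V = (\<exists>c0>0. \<forall>v. in_H1 \<Lambda> \<rho> v \<longrightarrow>
      (\<Sum>\<^sub>\<infinity>x\<in>\<Lambda>. \<Sum>r\<in>UNIV. \<Sum>s\<in>UNIV. hess0 V r s * Dfd v (\<rho> r) x * Dfd v (\<rho> s) x)
        \<ge> c0 * (\<Sum>\<^sub>\<infinity>x\<in>\<Lambda>. \<Sum>r\<in>UNIV. (Dfd v (\<rho> r) x)\<^sup>2))"

definition outer :: "real^2 \<Rightarrow> real^2 \<Rightarrow> real^2^2" where
  "outer x y = (\<chi> i j. x $ i * y $ j)"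

end

theory Submission
  imports Defs
begin

(* The rotation L about the centre xh maps the lattice onto itself, permutes the bonds rho r, and
   leaves u and the Hessian of V invariant, so the force f = f_u is L-invariant.

   Being the lattice divergence of an l2 field, an absolutely summable f has sum 0: pair f with a
   Lipschitz cutoff of scale N and move the difference onto the cutoff.

   Writing L x = Q x + t, invariance gives for the first moment m = Q m + (sum f) t = Q m, hence
   m = 0 because Q has no fixed vector; for the second moment M = Q M Q^T plus terms built from
   the lower moments, hence M = Q M Q^T, and a symmetric 2x2 matrix invariant under conjugation
   by a rotation through an angle outside pi Z is a multiple of the identity. *)

lemma summable_on_sum:
  fixes f :: "'i \<Rightarrow> 'a \<Rightarrow> 'b::{topological_comm_monoid_add, t2_space}"
  assumes "finite I" "\<And>i. i \<in> I \<Longrightarrow> f i summable_on A"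
  shows "(\<lambda>x. \<Sum>i\<in>I. f i x) summable_on A"
  using assms by (induction I rule: finite_induct) (auto intro: summable_on_add)

lemma infsum_sum:
  fixes f :: "'i \<Rightarrow> 'a \<Rightarrow> 'b::{topological_comm_monoid_add, t2_space}"
  assumes "finite I" "\<And>i. i \<in> I \<Longrightarrow> f i summable_on A"
  shows "(\<Sum>\<^sub>\<infinity>x\<in>A. \<Sum>i\<in>I. f i x) = (\<Sum>i\<in>I. \<Sum>\<^sub>\<infinity>x\<in>A. f i x)"
  using assms by (induction I rule: finite_induct) (auto simp: infsum_add summable_on_sum)

lemma infsum_diff:
  fixes f g :: "'a \<Rightarrow> 'b::{topological_ab_group_add, t2_space}"
  assumes "f summable_on A" "g summable_on A"
  shows "(\<Sum>\<^sub>\<infinity>x\<in>A. f x - g x) = infsum f A - infsum g A"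
  using infsum_add[OF assms(1) summable_on_uminus[THEN iffD2, OF assms(2)]] infsum_uminus[of g A]
  by simp

lemma summable_on_finite_support:
  fixes f :: "'a \<Rightarrow> 'b::{topological_comm_monoid_add, t2_space}"
  assumes "finite S" "\<And>x. x \<notin> S \<Longrightarrow> f x = 0"
  shows "f summable_on A"
  using summable_on_cong_neutral[of "S \<inter> A" A f f] assms by auto

lemma infsum_finite_support:
  fixes f :: "'a \<Rightarrow> 'b::{topological_comm_monoid_add, t2_space}"
  assumes "finite S" "\<And>x. x \<notin> S \<Longrightarrow> f x = 0" "S \<subseteq> A"
  shows "infsum f A = sum f S"
  using infsum_cong_neutral[of S A f f] assms by auto

lemma summable_on_insert_point:
  fixes f :: "'a \<Rightarrow> 'b::{uniform_topological_group_add, topological_comm_monoid_add, ab_group_add, complete_uniform_space}"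
  assumes "f summable_on (A - {a})"
  shows "f summable_on A"
  using summable_on_insert_iff[of f a "A - {a}"] assms
  by (metis insert_Diff_single summable_on_subset subset_insertI)

lemma summable_on_sum_squares:
  fixes D :: "'s \<Rightarrow> 'a \<Rightarrow> real"
  assumes "finite S" "\<And>s. s \<in> S \<Longrightarrow> (\<lambda>x. (D s x)\<^sup>2) summable_on A"
  shows "(\<lambda>x. (\<Sum>s\<in>S. c s * D s x)\<^sup>2) summable_on A"
proof (rule summable_on_comparison_test)
  show "(\<lambda>x. \<Sum>s\<in>S. (c s)\<^sup>2 * card S * (D s x)\<^sup>2) summable_on A"
    using assms by (intro summable_on_sum summable_on_cmult_right) auto
  fix x
  have "(\<Sum>s\<in>S. c s * D s x)\<^sup>2 \<le> (\<Sum>s\<in>S. (c s * D s x)\<^sup>2) * card S"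
    by (rule sum_squared_le_sum_of_squares)
  also have "\<dots> = (\<Sum>s\<in>S. (c s)\<^sup>2 * card S * (D s x)\<^sup>2)"
    by (simp add: sum_distrib_left sum_distrib_right power_mult_distrib algebra_simps)
  finally show "(\<Sum>s\<in>S. c s * D s x)\<^sup>2 \<le> (\<Sum>s\<in>S. (c s)\<^sup>2 * card S * (D s x)\<^sup>2)" .
qed simp

definition int_square :: "nat \<Rightarrow> (int \<times> int) set" where
  "int_square N = {- int N..int N} \<times> {- int N..int N}"

lemma finite_int_square [simp]: "finite (int_square N)"
  unfolding int_square_def by simp

lemma mem_int_square: "z \<in> int_square N \<longleftrightarrow> \<bar>fst z\<bar> \<le> int N \<and> \<bar>snd z\<bar> \<le> int N"
  unfolding int_square_def by (cases z) auto

lemma card_int_square: "card (int_square N) = (2 * N + 1)\<^sup>2"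
proof -
  have "card {- int N..int N} = 2 * N + 1" by simp
  then show ?thesis unfolding int_square_def by (simp add: card_cartesian_product power2_eq_square)
qed

lemma int_square_mono: "M \<le> N \<Longrightarrow> int_square M \<subseteq> int_square N"
  by (auto simp: mem_int_square)

lemma finite_subset_int_square:
  assumes "finite X"
  obtains M where "X \<subseteq> int_square M"
  using assms
proof (induction X arbitrary: thesis rule: finite_induct)
  case empty
  then show ?case by blast
next
  case (insert z X)
  then obtain M where "X \<subseteq> int_square M" by blast
  moreover have "int_square M \<subseteq> int_square (max M (nat \<bar>fst z\<bar> + nat \<bar>snd z\<bar>))"
    by (rule int_square_mono) simp
  moreover have "z \<in> int_square (max M (nat \<bar>fst z\<bar> + nat \<bar>snd z\<bar>))"
    by (auto simp: mem_int_square)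
  ultimately have "insert z X \<subseteq> int_square (max M (nat \<bar>fst z\<bar> + nat \<bar>snd z\<bar>))"
    by blast
  then show ?case by (rule insert.prems)
qed

lemma infsum_outside_int_square_tendsto_0:
  fixes h :: "int \<times> int \<Rightarrow> real"
  assumes "h summable_on UNIV"
  shows "(\<lambda>N. infsum h (- int_square N)) \<longlonglongrightarrow> 0"
proof -
  have "filterlim int_square (finite_subsets_at_top UNIV) sequentially"
    unfolding filterlim_finite_subsets_at_top
  proof (intro allI impI)
    fix X :: "(int \<times> int) set"
    assume "finite X \<and> X \<subseteq> UNIV"
    then obtain M where "X \<subseteq> int_square M"
      using finite_subset_int_square by blast
    then show "\<forall>\<^sub>F N in sequentially. finite (int_square N) \<and> X \<subseteq> int_square N \<and> int_square N \<subseteq> UNIV"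
      using int_square_mono by (auto intro!: eventually_sequentiallyI[of M])
  qed
  moreover have "(sum h \<longlongrightarrow> infsum h UNIV) (finite_subsets_at_top UNIV)"
    using assms has_sum_def has_sum_infsum by blast
  ultimately have "(\<lambda>N. sum h (int_square N)) \<longlonglongrightarrow> infsum h UNIV"
    by (rule filterlim_compose[rotated])
  then have "(\<lambda>N. infsum h UNIV - sum h (int_square N)) \<longlonglongrightarrow> infsum h UNIV - infsum h UNIV"
    by (intro tendsto_diff tendsto_const)
  moreover have "infsum h (- int_square N) = infsum h UNIV - sum h (int_square N)" for N
    using infsum_Diff[OF assms, of "int_square N"] by (simp add: Compl_eq_Diff_UNIV)
  ultimately show ?thesis by simp
qed

(* A sharp cutoff of an l2 field leaves a boundary sum of order N terms, which need not tend to 0.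
   The increments of this cutoff are O(1/N) on O(N^2) sites, so by Cauchy-Schwarz the error is
   controlled by the l2 tail of the field (cutoff_pairing_bound). *)

definition ramp :: "real \<Rightarrow> real \<Rightarrow> real" where
  "ramp N t = max 0 (min 1 (2 - \<bar>t\<bar> / N))"

definition cutoff :: "nat \<Rightarrow> int \<times> int \<Rightarrow> real" where
  "cutoff N z = ramp N (fst z) * ramp N (snd z)"

lemma ramp_bounds: "0 \<le> ramp N t" "ramp N t \<le> 1"
  unfolding ramp_def by auto

lemma ramp_eq_1: "N > 0 \<Longrightarrow> \<bar>t\<bar> \<le> N \<Longrightarrow> ramp N t = 1"
  unfolding ramp_def by (auto simp: field_simps)

lemma ramp_eq_0: "N > 0 \<Longrightarrow> 2 * N \<le> \<bar>t\<bar> \<Longrightarrow> ramp N t = 0"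
  unfolding ramp_def by (auto simp: field_simps)

lemma ramp_lipschitz:
  assumes "N > 0"
  shows "\<bar>ramp N t - ramp N s\<bar> \<le> \<bar>t - s\<bar> / N"
proof -
  have clip: "\<bar>max 0 (min 1 a) - max 0 (min 1 b)\<bar> \<le> \<bar>a - b\<bar>" for a b :: real
    by (auto simp: max_def min_def)
  have "(2 - \<bar>t\<bar> / N) - (2 - \<bar>s\<bar> / N) = (\<bar>s\<bar> - \<bar>t\<bar>) / N"
    by (simp add: diff_divide_distrib)
  then have "\<bar>(2 - \<bar>t\<bar> / N) - (2 - \<bar>s\<bar> / N)\<bar> = \<bar>\<bar>s\<bar> - \<bar>t\<bar>\<bar> / N"
    using assms by simp
  also have "\<dots> \<le> \<bar>t - s\<bar> / N"
    using assms by (intro divide_right_mono) auto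
  finally show ?thesis
    unfolding ramp_def using clip order_trans by blast
qed

lemma cutoff_bounds: "0 \<le> cutoff N z" "cutoff N z \<le> 1"
  unfolding cutoff_def using ramp_bounds by (auto intro: mult_le_one)

lemma cutoff_eq_1: "N > 0 \<Longrightarrow> z \<in> int_square N \<Longrightarrow> cutoff N z = 1"
  unfolding cutoff_def mem_int_square by (auto simp: ramp_eq_1)

lemma cutoff_eq_0:
  assumes "N > 0" "z \<notin> int_square (2 * N)"
  shows "cutoff N z = 0"
proof -
  have "2 * int N \<le> \<bar>fst z\<bar> \<or> 2 * int N \<le> \<bar>snd z\<bar>"
    using assms(2) unfolding mem_int_square by auto
  then have "real_of_int (2 * int N) \<le> real_of_int \<bar>fst z\<bar> \<or> real_of_int (2 * int N) \<le> real_of_int \<bar>snd z\<bar>"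
    by (simp only: of_int_le_iff)
  then have "2 * real N \<le> \<bar>real_of_int (fst z)\<bar> \<or> 2 * real N \<le> \<bar>real_of_int (snd z)\<bar>"
    by simp
  then show ?thesis
    unfolding cutoff_def using assms(1) ramp_eq_0[of N] by auto
qed

lemma cutoff_shift_diff_bound:
  assumes "N > 0"
  shows "\<bar>cutoff N (z + w) - cutoff N z\<bar> \<le> real_of_int (\<bar>fst w\<bar> + \<bar>snd w\<bar>) / N"
proof -
  define a b c d where "a = ramp N (fst (z + w))" "b = ramp N (snd (z + w))"
    "c = ramp N (fst z)" "d = ramp N (snd z)"
  have "\<bar>a - c\<bar> \<le> \<bar>fst w\<bar> / N" "\<bar>b - d\<bar> \<le> \<bar>snd w\<bar> / N"
    unfolding a_b_c_d_def using assms
      ramp_lipschitz[of N "fst z + fst w" "fst z"] ramp_lipschitz[of N "snd z + snd w" "snd z"]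
    by simp_all
  moreover have "\<bar>a * b - c * d\<bar> \<le> \<bar>a - c\<bar> * \<bar>b\<bar> + \<bar>c\<bar> * \<bar>b - d\<bar>"
    unfolding abs_mult[symmetric] by (rule order_trans[OF _ abs_triangle_ineq]) (simp add: algebra_simps)
  moreover have "\<bar>a - c\<bar> * \<bar>b\<bar> + \<bar>c\<bar> * \<bar>b - d\<bar> \<le> \<bar>a - c\<bar> + \<bar>b - d\<bar>"
    unfolding a_b_c_d_def using ramp_bounds by (intro add_mono mult_left_le mult_left_le_one_le) auto
  ultimately have "\<bar>a * b - c * d\<bar> \<le> real_of_int (\<bar>fst w\<bar> + \<bar>snd w\<bar>) / N"
    by (simp add: add_divide_distrib)
  then show ?thesis
    unfolding cutoff_def a_b_c_d_def .
qed

lemma infsum_shift_diff_times_finite_support: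
  fixes G \<phi> :: "'a::ab_group_add \<Rightarrow> real"
  assumes "finite S" "\<And>z. z \<notin> S \<Longrightarrow> \<phi> z = 0"
  shows "(\<Sum>\<^sub>\<infinity>z. (G (z - w) - G z) * \<phi> z) = (\<Sum>\<^sub>\<infinity>z. G z * (\<phi> (z + w) - \<phi> z))"
proof -
  have shifted: "(\<lambda>z. G z * \<phi> (z + w)) summable_on UNIV"
  proof (rule summable_on_finite_support[of "(\<lambda>z. z - w) ` S"])
    fix z
    assume "z \<notin> (\<lambda>z. z - w) ` S"
    then have "z + w \<notin> S"
      by (metis add_diff_cancel image_eqI)
    then show "G z * \<phi> (z + w) = 0"
      using assms(2) by simp
  qed (use assms(1) in simp)
  have unshifted: "(\<lambda>z. G (z - w) * \<phi> z) summable_on UNIV" "(\<lambda>z. G z * \<phi> z) summable_on UNIV"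
    using assms by (auto intro: summable_on_finite_support[of S])
  have "bij (\<lambda>z. z + w)"
    by (rule bij_betwI[where g="\<lambda>z. z - w"]) auto
  then have reindex: "(\<Sum>\<^sub>\<infinity>z. G (z - w) * \<phi> z) = (\<Sum>\<^sub>\<infinity>z. G z * \<phi> (z + w))"
    using infsum_reindex_bij_betw[of "\<lambda>z. z + w" UNIV UNIV "\<lambda>z. G (z - w) * \<phi> z"] by simp
  have "(\<Sum>\<^sub>\<infinity>z. (G (z - w) - G z) * \<phi> z) = (\<Sum>\<^sub>\<infinity>z. G (z - w) * \<phi> z - G z * \<phi> z)"
    by (simp only: left_diff_distrib)
  also have "\<dots> = (\<Sum>\<^sub>\<infinity>z. G z * \<phi> (z + w)) - (\<Sum>\<^sub>\<infinity>z. G z * \<phi> z)"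
    by (simp only: infsum_diff[OF unshifted] reindex)
  also have "\<dots> = (\<Sum>\<^sub>\<infinity>z. G z * \<phi> (z + w) - G z * \<phi> z)"
    by (rule infsum_diff[OF shifted unshifted(2), symmetric])
  also have "\<dots> = (\<Sum>\<^sub>\<infinity>z. G z * (\<phi> (z + w) - \<phi> z))"
    by (simp only: right_diff_distrib)
  finally show ?thesis .
qed

lemma sum_abs_le_sqrt_card_sum_squares:
  fixes G :: "'a \<Rightarrow> real"
  shows "(\<Sum>z\<in>A. \<bar>G z\<bar>) \<le> sqrt (card A) * sqrt (\<Sum>z\<in>A. (G z)\<^sup>2)"
proof -
  have "(\<Sum>z\<in>A. \<bar>G z\<bar>)\<^sup>2 \<le> card A * (\<Sum>z\<in>A. (G z)\<^sup>2)"
    using sum_squared_le_sum_of_squares[of "\<lambda>z. \<bar>G z\<bar>" A] by (simp add: mult.commute)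
  then show ?thesis
    by (simp add: real_le_rsqrt flip: real_sqrt_mult)
qed

lemma cutoff_shift_diff_eq_0:
  assumes w: "\<bar>fst w\<bar> \<le> int K" "\<bar>snd w\<bar> \<le> int K" and K: "1 \<le> K" "K \<le> N"
    and z: "z \<notin> int_square (2 * N + K) - int_square (N - K)"
  shows "cutoff N (z + w) = cutoff N z"
proof -
  have N: "N > 0" using K by simp
  show ?thesis
  proof (cases "z \<in> int_square (N - K)")
    case True
    then have "z \<in> int_square N" "z + w \<in> int_square N"
      using w K by (auto simp: mem_int_square)
    then show ?thesis using cutoff_eq_1[OF N] by simp
  next
    case False
    then have "z \<notin> int_square (2 * N)" "z + w \<notin> int_square (2 * N)"
      using z w by (auto simp: mem_int_square)
    then show ?thesis using cutoff_eq_0[OF N] by simp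
  qed
qed

lemma cutoff_pairing_bound:
  fixes G :: "int \<times> int \<Rightarrow> real"
  assumes G2: "(\<lambda>z. (G z)\<^sup>2) summable_on UNIV"
    and w: "\<bar>fst w\<bar> \<le> int K" "\<bar>snd w\<bar> \<le> int K" and K: "1 \<le> K" "K \<le> N"
  shows "\<bar>\<Sum>\<^sub>\<infinity>z. G z * (cutoff N (z + w) - cutoff N z)\<bar>
          \<le> 14 * real K * sqrt (\<Sum>\<^sub>\<infinity>z\<in>- int_square (N - K). (G z)\<^sup>2)"
proof -
  define A where "A = int_square (2 * N + K) - int_square (N - K)"
  define T where "T = (\<Sum>\<^sub>\<infinity>z\<in>- int_square (N - K). (G z)\<^sup>2)"
  have N: "N > 0" using K by simp
  have "(\<Sum>\<^sub>\<infinity>z. G z * (cutoff N (z + w) - cutoff N z)) = (\<Sum>z\<in>A. G z * (cutoff N (z + w) - cutoff N z))"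
    using cutoff_shift_diff_eq_0[OF w K] by (intro infsum_finite_support) (auto simp: A_def)
  also have "\<bar>\<dots>\<bar> \<le> (\<Sum>z\<in>A. \<bar>G z\<bar> * (2 * K / N))"
  proof (rule order_trans[OF sum_abs sum_mono])
    fix z
    have "\<bar>cutoff N (z + w) - cutoff N z\<bar> \<le> real_of_int (\<bar>fst w\<bar> + \<bar>snd w\<bar>) / N"
      by (rule cutoff_shift_diff_bound[OF N])
    also have "\<dots> \<le> 2 * K / N"
      using w by (intro divide_right_mono) auto
    finally show "\<bar>G z * (cutoff N (z + w) - cutoff N z)\<bar> \<le> \<bar>G z\<bar> * (2 * K / N)"
      unfolding abs_mult by (rule mult_left_mono) simp
  qed
  also have "\<dots> = 2 * K / N * (\<Sum>z\<in>A. \<bar>G z\<bar>)"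
    by (simp add: sum_distrib_left sum_divide_distrib mult.commute)
  also have "\<dots> \<le> 2 * K / N * (7 * N * sqrt T)"
  proof (intro mult_left_mono order_trans[OF sum_abs_le_sqrt_card_sum_squares] mult_mono)
    have "card A \<le> card (int_square (2 * N + K))"
      unfolding A_def by (rule card_mono) auto
    also have "\<dots> \<le> (7 * N)\<^sup>2"
      unfolding card_int_square using K by (intro power_mono) auto
    finally have "real (card A) \<le> (7 * real N)\<^sup>2"
      by (metis of_nat_le_iff of_nat_mult of_nat_numeral of_nat_power)
    then show "sqrt (card A) \<le> 7 * N"
      by (intro real_le_lsqrt) simp_all
    show "sqrt (\<Sum>z\<in>A. (G z)\<^sup>2) \<le> sqrt T"
      unfolding T_def using G2
      by (intro real_sqrt_le_mono finite_sum_le_infsum) (auto simp: A_def intro: summable_on_subset)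
  qed (auto intro: sum_nonneg)
  also have "\<dots> = 14 * real K * sqrt T" using N by simp
  finally show ?thesis unfolding T_def .
qed

lemma infsum_minus_cutoff_bound:
  fixes F :: "int \<times> int \<Rightarrow> real"
  assumes F1: "(\<lambda>z. norm (F z)) summable_on UNIV" and N: "N > 0"
  shows "\<bar>infsum F UNIV - (\<Sum>\<^sub>\<infinity>z. F z * cutoff N z)\<bar> \<le> (\<Sum>\<^sub>\<infinity>z\<in>- int_square N. norm (F z))"
proof -
  have F: "F summable_on UNIV"
    using F1 summable_on_iff_abs_summable_on_real by blast
  have F_cutoff: "(\<lambda>z. F z * cutoff N z) summable_on UNIV"
    by (rule summable_on_finite_support[of "int_square (2 * N)"]) (auto simp: cutoff_eq_0[OF N])
  have bound: "norm (F z * (1 - cutoff N z)) \<le> norm (F z)" for z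
    using cutoff_bounds[of N z] by (simp add: abs_mult mult_left_le)
  have F1_tail: "(\<lambda>z. norm (F z)) summable_on (- int_square N)"
    using F1 summable_on_subset by blast
  then have tail: "(\<lambda>z. norm (F z * (1 - cutoff N z))) summable_on (- int_square N)"
    by (rule summable_on_comparison_test) (use bound in auto)
  have "infsum F UNIV - (\<Sum>\<^sub>\<infinity>z. F z * cutoff N z) = (\<Sum>\<^sub>\<infinity>z. F z * (1 - cutoff N z))"
    by (simp add: infsum_diff[OF F F_cutoff, symmetric] right_diff_distrib)
  also have "\<dots> = (\<Sum>\<^sub>\<infinity>z\<in>- int_square N. F z * (1 - cutoff N z))"
    by (rule infsum_cong_neutral) (auto simp: cutoff_eq_1[OF N])
  also have "\<bar>\<dots>\<bar> \<le> (\<Sum>\<^sub>\<infinity>z\<in>- int_square N. norm (F z * (1 - cutoff N z)))"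
    using norm_infsum_bound[OF tail] by simp
  also have "\<dots> \<le> (\<Sum>\<^sub>\<infinity>z\<in>- int_square N. norm (F z))"
    using tail F1_tail bound by (rule infsum_mono)
  finally show ?thesis .
qed

lemma infsum_discrete_divergence_bound:
  fixes G :: "'r::finite \<Rightarrow> int \<times> int \<Rightarrow> real" and w :: "'r \<Rightarrow> int \<times> int"
  defines "F \<equiv> \<lambda>z. \<Sum>r\<in>UNIV. G r (z - w r) - G r z"
  assumes G2: "\<And>r. (\<lambda>z. (G r z)\<^sup>2) summable_on UNIV"
    and F1: "(\<lambda>z. norm (F z)) summable_on UNIV"
    and w: "\<And>r. \<bar>fst (w r)\<bar> \<le> int K \<and> \<bar>snd (w r)\<bar> \<le> int K" and K: "1 \<le> K"
  shows "\<bar>infsum F UNIV\<bar> \<le> (\<Sum>\<^sub>\<infinity>z\<in>- int_square (M + K). norm (F z))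
            + (\<Sum>r\<in>UNIV. 14 * real K * sqrt (\<Sum>\<^sub>\<infinity>z\<in>- int_square M. (G r z)\<^sup>2))"
proof -
  define N where "N = M + K"
  have N: "N > 0" using K N_def by simp
  have outside: "\<And>z. z \<notin> int_square (2 * N) \<Longrightarrow> cutoff N z = 0"
    using cutoff_eq_0[OF N] by blast
  have "(\<Sum>\<^sub>\<infinity>z. F z * cutoff N z) = (\<Sum>\<^sub>\<infinity>z. \<Sum>r\<in>UNIV. (G r (z - w r) - G r z) * cutoff N z)"
    unfolding F_def by (simp add: sum_distrib_right)
  also have "\<dots> = (\<Sum>r\<in>UNIV. \<Sum>\<^sub>\<infinity>z. (G r (z - w r) - G r z) * cutoff N z)"
    by (intro infsum_sum summable_on_finite_support[of "int_square (2 * N)"]) (auto simp: outside)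
  also have "\<dots> = (\<Sum>r\<in>UNIV. \<Sum>\<^sub>\<infinity>z. G r z * (cutoff N (z + w r) - cutoff N z))"
    by (intro sum.cong infsum_shift_diff_times_finite_support[of "int_square (2 * N)"]) (auto simp: outside)
  finally have "\<bar>\<Sum>\<^sub>\<infinity>z. F z * cutoff N z\<bar>
      \<le> (\<Sum>r\<in>UNIV. \<bar>\<Sum>\<^sub>\<infinity>z. G r z * (cutoff N (z + w r) - cutoff N z)\<bar>)"
    by (simp only: sum_abs)
  also have "\<dots> \<le> (\<Sum>r\<in>UNIV. 14 * real K * sqrt (\<Sum>\<^sub>\<infinity>z\<in>- int_square M. (G r z)\<^sup>2))"
  proof (rule sum_mono)
    fix r
    show "\<bar>\<Sum>\<^sub>\<infinity>z. G r z * (cutoff N (z + w r) - cutoff N z)\<bar>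
        \<le> 14 * real K * sqrt (\<Sum>\<^sub>\<infinity>z\<in>- int_square M. (G r z)\<^sup>2)"
      using cutoff_pairing_bound[OF G2, of "w r" K N] w[of r] K unfolding N_def by simp
  qed
  finally show ?thesis
    using infsum_minus_cutoff_bound[OF F1 N] unfolding N_def by linarith
qed

theorem infsum_discrete_divergence_eq_0:
  fixes G :: "'r::finite \<Rightarrow> int \<times> int \<Rightarrow> real" and w :: "'r \<Rightarrow> int \<times> int"
  assumes G2: "\<And>r. (\<lambda>z. (G r z)\<^sup>2) summable_on UNIV"
    and F1: "(\<lambda>z. norm (\<Sum>r\<in>UNIV. G r (z - w r) - G r z)) summable_on UNIV"
  shows "(\<Sum>\<^sub>\<infinity>z. \<Sum>r\<in>UNIV. G r (z - w r) - G r z) = 0"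
proof -
  define K :: nat where "K = 1 + (\<Sum>r\<in>UNIV. nat \<bar>fst (w r)\<bar> + nat \<bar>snd (w r)\<bar>)"
  have w: "\<bar>fst (w r)\<bar> \<le> int K \<and> \<bar>snd (w r)\<bar> \<le> int K" for r
  proof -
    have "nat \<bar>fst (w r)\<bar> + nat \<bar>snd (w r)\<bar> \<le> (\<Sum>r\<in>UNIV. nat \<bar>fst (w r)\<bar> + nat \<bar>snd (w r)\<bar>)"
      by (rule member_le_sum) auto
    then show ?thesis unfolding K_def by linarith
  qed
  have "(\<lambda>M. (\<Sum>\<^sub>\<infinity>z\<in>- int_square (M + K). norm (\<Sum>r\<in>UNIV. G r (z - w r) - G r z))
            + (\<Sum>r\<in>UNIV. 14 * real K * sqrt (\<Sum>\<^sub>\<infinity>z\<in>- int_square M. (G r z)\<^sup>2)))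
         \<longlonglongrightarrow> 0 + (\<Sum>r\<in>(UNIV :: 'r set). 14 * real K * sqrt 0)"
    by (intro tendsto_add tendsto_sum tendsto_mult_left tendsto_real_sqrt
        LIMSEQ_ignore_initial_segment[OF infsum_outside_int_square_tendsto_0[OF F1]]
        infsum_outside_int_square_tendsto_0[OF G2])
  then have "\<bar>\<Sum>\<^sub>\<infinity>z. \<Sum>r\<in>UNIV. G r (z - w r) - G r z\<bar> \<le> 0"
    using infsum_discrete_divergence_bound[OF G2 F1 w] K_def
    by (intro LIMSEQ_le_const) auto
  then show ?thesis by simp
qed

lemma rot_mult_vec_nth:
  "(rot \<theta> *v v) $ 1 = cos \<theta> * v $ 1 - sin \<theta> * v $ 2"
  "(rot \<theta> *v v) $ 2 = sin \<theta> * v $ 1 + cos \<theta> * v $ 2"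
  by (simp_all add: rot_def matrix_vector_mult_def sum_2)

lemma rot_rot: "rot \<alpha> *v (rot \<beta> *v v) = rot (\<alpha> + \<beta>) *v v"
  by (simp add: vec_eq_iff forall_2 rot_mult_vec_nth cos_add sin_add algebra_simps)

lemma rot_funpow: "((\<lambda>v. rot \<theta> *v v) ^^ n) v = rot (n * \<theta>) *v v"
proof (induction n)
  case 0
  then show ?case by (simp add: vec_eq_iff forall_2 rot_mult_vec_nth)
next
  case (Suc n)
  then show ?case by (simp add: rot_rot distrib_right)
qed

lemma sin_cos_squared_add_mult: "sin \<theta> * sin \<theta> + cos \<theta> * cos (\<theta>::real) = 1"
  using sin_cos_squared_add[of \<theta>] by (simp add: power2_eq_square)

lemma rot_eq_self_imp_0:
  assumes "sin \<theta> \<noteq> 0" "rot \<theta> *v v = v"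
  shows "v = 0"
proof -
  define a b c s where "a = v $ 1" "b = v $ 2" "c = cos \<theta>" "s = sin \<theta>"
  have "c * a - s * b = a" "s * a + c * b = b"
    using arg_cong[OF assms(2), of "\<lambda>x. x $ 1"] arg_cong[OF assms(2), of "\<lambda>x. x $ 2"]
    unfolding a_b_c_s_def by (simp_all add: rot_mult_vec_nth)
  then have "(1 - c) * a = - s * b" "(1 - c) * b = s * a"
    by (simp_all add: algebra_simps)
  then have "(1 - c) * ((1 - c) * a) = - s * (s * a)"
    by (metis mult.left_commute mult_minus_left)
  moreover have "s * s + c * c = 1"
    unfolding a_b_c_s_def by (rule sin_cos_squared_add_mult)
  ultimately have "2 * (1 - c) * a = 0"
    by algebra
  moreover have "c \<noteq> 1"
    using assms(1) \<open>s * s + c * c = 1\<close> unfolding a_b_c_s_def by auto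
  ultimately have "a = 0"
    by simp
  then have "b = 0"
    using assms(1) \<open>(1 - c) * a = - s * b\<close> unfolding a_b_c_s_def by simp
  with \<open>a = 0\<close> show ?thesis
    unfolding a_b_c_s_def by (simp add: vec_eq_iff forall_2)
qed

lemma rot_conj_nth:
  "(rot \<theta> ** M ** transpose (rot \<theta>)) $ 1 $ 1
     = cos \<theta> * (cos \<theta> * M $ 1 $ 1 - sin \<theta> * M $ 2 $ 1) - sin \<theta> * (cos \<theta> * M $ 1 $ 2 - sin \<theta> * M $ 2 $ 2)"
  "(rot \<theta> ** M ** transpose (rot \<theta>)) $ 1 $ 2
     = sin \<theta> * (cos \<theta> * M $ 1 $ 1 - sin \<theta> * M $ 2 $ 1) + cos \<theta> * (cos \<theta> * M $ 1 $ 2 - sin \<theta> * M $ 2 $ 2)"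
  by (simp_all add: matrix_matrix_mult_def transpose_def sum_2 rot_def algebra_simps)

lemma rot_conj_eq_self_imp_scalar:
  fixes M :: "real^2^2"
  assumes "sin \<theta> \<noteq> 0" "rot \<theta> ** M ** transpose (rot \<theta>) = M" "M $ 2 $ 1 = M $ 1 $ 2"
  shows "M = M $ 1 $ 1 *\<^sub>R mat 1"
proof -
  define a b d c s where "a = M $ 1 $ 1" "b = M $ 1 $ 2" "d = M $ 2 $ 2" "c = cos \<theta>" "s = sin \<theta>"
  have one: "s * s + c * c = 1"
    unfolding a_b_d_c_s_def by (rule sin_cos_squared_add_mult)
  have entries: "c * (c * a - s * b) - s * (c * b - s * d) = a" "s * (c * a - s * b) + c * (c * b - s * d) = b"
    using arg_cong[OF assms(2), of "\<lambda>X. X $ 1 $ 1"] arg_cong[OF assms(2), of "\<lambda>X. X $ 1 $ 2"] assms(3)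
    unfolding a_b_d_c_s_def by (simp_all add: rot_conj_nth)
  have "s * (s * (a - d)) + 2 * c * (s * b)
      = (s * s + c * c - 1) * a - (c * (c * a - s * b) - s * (c * b - s * d) - a)"
    by (simp add: algebra_simps)
  then have diag: "s * (s * (a - d)) + 2 * c * (s * b) = 0"
    using entries(1) one by simp
  have "2 * s * (s * b) - c * (s * (a - d))
      = (s * s + c * c - 1) * b - (s * (c * a - s * b) + c * (c * b - s * d) - b)"
    by (simp add: algebra_simps)
  then have offdiag: "2 * s * (s * b) - c * (s * (a - d)) = 0"
    using entries(2) one by simp
  have "(s * s + c * c) * (s * (a - d))
      = s * (s * (s * (a - d)) + 2 * c * (s * b)) - c * (2 * s * (s * b) - c * (s * (a - d)))"
    by (simp add: algebra_simps)
  then have "s * (a - d) = 0"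
    using diag offdiag one by simp
  then have "a = d"
    using assms(1) unfolding a_b_d_c_s_def by simp
  then have "b = 0"
    using assms(1) offdiag unfolding a_b_d_c_s_def by simp
  show ?thesis
    using assms(3) \<open>a = d\<close> \<open>b = 0\<close> unfolding a_b_d_c_s_def
    by (simp add: vec_eq_iff forall_2 mat_def)
qed

lemma bij_betw_if_funpow_eq_id:
  assumes into: "f ` A \<subseteq> A" and "n > 0" and period: "\<And>x. x \<in> A \<Longrightarrow> (f ^^ n) x = x"
  shows "bij_betw f A A"
proof (rule bij_betwI)
  have iter_into: "(f ^^ m) x \<in> A" if "x \<in> A" for m x
    using that into by (induction m) auto
  have n: "n = Suc (n - 1)" using \<open>n > 0\<close> by simp
  show "f \<in> A \<rightarrow> A" "(f ^^ (n - 1)) \<in> A \<rightarrow> A"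
    using into iter_into by auto
  show "(f ^^ (n - 1)) (f x) = x" if "x \<in> A" for x
    using period[OF that] by (subst (asm) n, simp only: funpow_Suc_right comp_def)
  show "f ((f ^^ (n - 1)) x) = x" if "x \<in> A" for x
    using period[OF that] by (subst (asm) n, simp only: funpow.simps comp_def)
qed

lemma vec2_nth [simp]: "vec2 a b $ 1 = a" "vec2 a b $ 2 = b"
  by (simp_all add: vec2_def)

lemma vec2_eq_iff: "vec2 a b = vec2 c d \<longleftrightarrow> a = c \<and> b = d"
  by (simp add: vec_eq_iff forall_2)

lemma vec2_zero [simp]: "vec2 0 0 = 0"
  by (simp add: vec_eq_iff forall_2)

lemma vec2_add: "vec2 a b + vec2 c d = vec2 (a + c) (b + d)"
  by (simp add: vec_eq_iff forall_2)

lemma vec2_diff: "vec2 a b - vec2 c d = vec2 (a - c) (b - d)"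
  by (simp add: vec_eq_iff forall_2)

lemma vec2_scaleR: "r *\<^sub>R vec2 a b = vec2 (r * a) (r * b)"
  by (simp add: vec_eq_iff forall_2)

lemma norm_vec2_squared: "(norm (vec2 a b))\<^sup>2 = a\<^sup>2 + b\<^sup>2"
  unfolding power2_norm_eq_inner by (simp add: inner_vec_def sum_2 power2_eq_square)

lemma rot_mult_vec2: "rot \<theta> *v vec2 a b = vec2 (cos \<theta> * a - sin \<theta> * b) (sin \<theta> * a + cos \<theta> * b)"
  by (simp add: vec_eq_iff forall_2 rot_mult_vec_nth)

definition lattice_order :: "lattice_kind \<Rightarrow> nat" where
  "lattice_order k = (case k of Square \<Rightarrow> 4 | Triangular \<Rightarrow> 3)"

lemma lat_rot_eq_rot: "lat_rot k = rot (2 * pi / lattice_order k)"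
  by (cases k) (simp_all add: lat_rot_def lattice_order_def)

lemma sin_lattice_angle_neq_0: "sin (2 * pi / lattice_order k) \<noteq> 0"
  by (cases k) (simp_all add: lattice_order_def sin_120)

lemma lat_rot_funpow_order: "((\<lambda>v. lat_rot k *v v) ^^ lattice_order k) v = v"
proof -
  have "lattice_order k > 0" by (cases k) (simp_all add: lattice_order_def)
  then show ?thesis
    unfolding lat_rot_eq_rot rot_funpow by (simp add: vec_eq_iff forall_2 rot_mult_vec_nth)
qed

lemma bij_lat_rot: "bij (\<lambda>v. lat_rot k *v v)"
  by (rule bij_betw_if_funpow_eq_id[OF _ _ lat_rot_funpow_order])
     (auto simp: lattice_order_def split: lattice_kind.split)

definition lattice_point :: "lattice_kind \<Rightarrow> int \<times> int \<Rightarrow> real^2" where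
  "lattice_point k z = lat_mat k *v vec2 (of_int (fst z)) (of_int (snd z))"

lemma lattice_point_Square: "lattice_point Square (a, b) = vec2 (of_int a) (of_int b)"
  by (simp add: lattice_point_def lat_mat_def)

lemma lattice_point_Triangular:
  "lattice_point Triangular (a, b) = vec2 (of_int a + of_int b / 2) (sqrt 3 / 2 * of_int b)"
  by (simp add: lattice_point_def lat_mat_def vec_eq_iff forall_2 matrix_vector_mult_def sum_2)

lemma lattice_eq_range: "lattice k = range (lattice_point k)"
  unfolding lattice_def lattice_point_def image_def by force

lemma lattice_point_add: "lattice_point k (z + z') = lattice_point k z + lattice_point k z'"
  unfolding lattice_point_def by (simp add: vec2_add flip: matrix_vector_right_distrib)

lemma lattice_point_diff: "lattice_point k (z - z') = lattice_point k z - lattice_point k z'"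
  unfolding lattice_point_def by (simp add: vec2_diff flip: matrix_vector_mult_diff_distrib)

lemma inj_lattice_point: "inj (lattice_point k)"
proof (rule injI)
  fix z z' :: "int \<times> int"
  assume eq: "lattice_point k z = lattice_point k z'"
  obtain a b a' b' where z: "z = (a, b)" "z' = (a', b')" by fastforce
  show "z = z'"
  proof (cases k)
    case Square
    then show ?thesis
      using eq unfolding z by (simp add: lattice_point_Square vec2_eq_iff)
  next
    case Triangular
    then have "b = b'"
      using eq unfolding z by (simp add: lattice_point_Triangular vec2_eq_iff)
    with Triangular show ?thesis
      using eq unfolding z by (simp add: lattice_point_Triangular vec2_eq_iff)
  qed
qed

lemma lattice_add: "x \<in> lattice k \<Longrightarrow> y \<in> lattice k \<Longrightarrow> x + y \<in> lattice k"
  unfolding lattice_eq_range by (auto simp flip: lattice_point_add)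

lemma lattice_diff: "x \<in> lattice k \<Longrightarrow> y \<in> lattice k \<Longrightarrow> x - y \<in> lattice k"
  unfolding lattice_eq_range by (auto simp flip: lattice_point_diff)

lemma lat_rot_lattice_point:
  "lat_rot k *v lattice_point k (a, b)
     = lattice_point k (case k of Square \<Rightarrow> (- b, a) | Triangular \<Rightarrow> (- a - b, a))"
proof (cases k)
  case Square
  then show ?thesis
    by (simp add: lattice_point_Square lat_rot_def rot_mult_vec2)
next
  case Triangular
  have "sqrt 3 * (sqrt 3 * x) = 3 * x" for x :: real
    by (simp flip: mult.assoc)
  moreover have "lat_rot Triangular *v vec2 x y = vec2 (- x / 2 - sqrt 3 / 2 * y) (sqrt 3 / 2 * x - y / 2)" for x y
    by (simp add: lat_rot_def rot_mult_vec2 cos_120 sin_120)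
  ultimately show ?thesis
    using Triangular by (simp add: lattice_point_Triangular vec2_eq_iff field_simps)
qed

lemma lat_rot_in_lattice:
  assumes "x \<in> lattice k"
  shows "lat_rot k *v x \<in> lattice k"
proof -
  obtain a b where "x = lattice_point k (a, b)"
    using assms unfolding lattice_eq_range by auto
  then show ?thesis
    unfolding lattice_eq_range by (simp only: lat_rot_lattice_point rangeI)
qed

definition lattice_norm_form :: "lattice_kind \<Rightarrow> int \<times> int \<Rightarrow> int" where
  "lattice_norm_form k z = (case k of
      Square \<Rightarrow> (fst z)\<^sup>2 + (snd z)\<^sup>2
    | Triangular \<Rightarrow> (fst z)\<^sup>2 + fst z * snd z + (snd z)\<^sup>2)"

lemma norm_lattice_point_squared: "(norm (lattice_point k z))\<^sup>2 = of_int (lattice_norm_form k z)"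
proof -
  obtain a b where z: "z = (a, b)" by fastforce
  have "sqrt 3 * (sqrt 3 * x) = 3 * x" for x :: real
    by (simp flip: mult.assoc)
  then show ?thesis
    unfolding z by (cases k)
      (simp_all only: lattice_point_Square lattice_point_Triangular norm_vec2_squared,
       simp_all add: lattice_norm_form_def power2_eq_square algebra_simps)
qed

lemma lattice_norm_form_pos:
  assumes "z \<noteq> 0"
  shows "lattice_norm_form k z \<ge> 1"
proof -
  obtain a b where z: "z = (a, b)" by fastforce
  have ab: "a \<noteq> 0 \<or> b \<noteq> 0" using assms z by (auto simp: zero_prod_def)
  have "0 < a\<^sup>2 + b\<^sup>2"
    using ab by (auto intro: add_pos_nonneg add_nonneg_pos)
  moreover have "0 < a\<^sup>2 + a * b + b\<^sup>2"
  proof -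
    have "4 * (a\<^sup>2 + a * b + b\<^sup>2) = (2 * a + b)\<^sup>2 + 3 * b\<^sup>2"
      by (simp add: power2_eq_square algebra_simps)
    moreover have "0 < (2 * a + b)\<^sup>2 + 3 * b\<^sup>2"
      using ab by (cases "b = 0") (auto intro: add_nonneg_pos)
    ultimately have "0 < 4 * (a\<^sup>2 + a * b + b\<^sup>2)" by simp
    then show ?thesis by simp
  qed
  ultimately show ?thesis
    unfolding z lattice_norm_form_def by (cases k) simp_all
qed

lemma norm_ge_1_if_in_lattice:
  assumes "x \<in> lattice k" "x \<noteq> 0"
  shows "1 \<le> norm x"
proof -
  obtain z where x: "x = lattice_point k z"
    using assms(1) unfolding lattice_eq_range by auto
  then have "z \<noteq> 0"
    using assms(2) by (auto simp: lattice_point_def)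
  then have "1 \<le> (norm x)\<^sup>2"
    unfolding x norm_lattice_point_squared using lattice_norm_form_pos by simp
  then show ?thesis
    using power2_le_imp_le[of 1 "norm x"] by simp
qed

lemma lattice_point_minus_lat_rot:
  "lattice_point k (a, b) - lat_rot k *v lattice_point k (a, b)
     = lattice_point k (case k of Square \<Rightarrow> (a + b, b - a) | Triangular \<Rightarrow> (2 * a + b, b - a))"
  by (cases k) (simp_all add: lat_rot_lattice_point flip: lattice_point_diff)

lemma lattice_point_scale: "lattice_point k (c * a, c * b) = of_int c *\<^sub>R lattice_point k (a, b)"
  by (simp add: lattice_point_def vec2_scaleR matrix_vector_mult_scaleR flip: vec2_scaleR)

lemma odd_add_if_sum_squares_eq_1:
  fixes a b :: int
  assumes "a\<^sup>2 + b\<^sup>2 = 1"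
  shows "odd (a + b)"
proof -
  have "(a + b)\<^sup>2 = 1 + 2 * (a * b)"
    using assms by (simp add: power2_eq_square algebra_simps)
  then have "odd ((a + b)\<^sup>2)" by simp
  then show ?thesis by simp
qed

lemma hexagonal_unit_bound:
  fixes a b :: int
  assumes "a\<^sup>2 + a * b + b\<^sup>2 = 1"
  shows "\<bar>a\<bar> \<le> 1" "\<bar>b\<bar> \<le> 1"
proof -
  have "4 * (a\<^sup>2 + a * b + b\<^sup>2) = (2 * a + b)\<^sup>2 + 3 * b\<^sup>2"
    "4 * (a\<^sup>2 + a * b + b\<^sup>2) = (2 * b + a)\<^sup>2 + 3 * a\<^sup>2"
    by (simp_all add: power2_eq_square algebra_simps)
  then have "4 = (2 * a + b)\<^sup>2 + 3 * b\<^sup>2" "4 = (2 * b + a)\<^sup>2 + 3 * a\<^sup>2"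
    using assms by simp_all
  then have "3 * a\<^sup>2 \<le> 4" "3 * b\<^sup>2 \<le> 4"
    using zero_le_power2[of "2 * a + b"] zero_le_power2[of "2 * b + a"] by linarith+
  then have "a\<^sup>2 \<le> 1" "b\<^sup>2 \<le> 1" by presburger+
  then show "\<bar>a\<bar> \<le> 1" "\<bar>b\<bar> \<le> 1" by (simp_all add: abs_square_le_1)
qed

text \<open>Two sides of a unit triangle of the triangular lattice, in lattice coordinates.\<close>

lemma unit_triangle_mod_3:
  fixes e1 e2 f1 f2 :: int
  assumes "e1\<^sup>2 + e1 * e2 + e2\<^sup>2 = 1" "f1\<^sup>2 + f1 * f2 + f2\<^sup>2 = 1"
    "(e1 - f1)\<^sup>2 + (e1 - f1) * (e2 - f2) + (e2 - f2)\<^sup>2 = 1"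
  shows "3 dvd (e1 - e2) + (f1 - f2)"
proof -
  have "e1 \<in> {-1, 0, 1}" "e2 \<in> {-1, 0, 1}" "f1 \<in> {-1, 0, 1}" "f2 \<in> {-1, 0, 1}"
    using hexagonal_unit_bound[OF assms(1)] hexagonal_unit_bound[OF assms(2)] by auto
  then show ?thesis using assms by auto
qed

lemma lattice_point_norm_form_eq_1:
  assumes "norm (lattice_point k z) = 1"
  shows "lattice_norm_form k z = 1"
  using norm_lattice_point_squared[of k z] assms by simp

lemma square_centre_displacement_in_lattice:
  assumes "admissible_centre Square xh"
  shows "xh - lat_rot Square *v xh \<in> lattice Square"
proof -
  let ?Q = "\<lambda>y. lat_rot Square *v y" and ?E = "lattice_point Square"
  obtain z v w where unit: "norm v = 1" "norm w = 1" and z: "z \<in> lattice Square"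
    and corners: "z + v \<in> lattice Square" "z + w \<in> lattice Square"
    and xh: "xh = z + (1/2) *\<^sub>R (v + w)"
    using assms unfolding admissible_centre_def by auto
  obtain v1 v2 w1 w2 where v: "v = ?E (v1, v2)" and w: "w = ?E (w1, w2)"
    using lattice_diff[OF corners(1) z] lattice_diff[OF corners(2) z]
    unfolding lattice_eq_range by (auto simp: surj_pair)
  have unit_coords: "v1\<^sup>2 + v2\<^sup>2 = 1" "w1\<^sup>2 + w2\<^sup>2 = 1"
    using lattice_point_norm_form_eq_1[of Square "(v1, v2)"] lattice_point_norm_form_eq_1[of Square "(w1, w2)"]
      unit unfolding v w by (simp_all add: lattice_norm_form_def)
  have "odd (v1 + v2)" "odd (w1 + w2)"
    using odd_add_if_sum_squares_eq_1[OF unit_coords(1)] odd_add_if_sum_squares_eq_1[OF unit_coords(2)] .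
  then obtain m1 m2 where m: "(v1 + w1) + (v2 + w2) = 2 * m1" "(v2 + w2) - (v1 + w1) = 2 * m2"
    by (metis evenE odd_add even_diff add.commute add.left_commute diff_add_eq)
  have "(v + w) - ?Q (v + w) = ?E (2 * m1, 2 * m2)"
    unfolding v w m[symmetric] lattice_point_add[symmetric]
    using lattice_point_minus_lat_rot[of Square "v1 + w1" "v2 + w2"] by simp
  then have "(1/2) *\<^sub>R ((v + w) - ?Q (v + w)) = ?E (m1, m2)"
    by (simp add: lattice_point_scale)
  moreover have "xh - ?Q xh = (z - ?Q z) + (1/2) *\<^sub>R ((v + w) - ?Q (v + w))"
    unfolding xh by (simp add: algebra_simps)
  ultimately show ?thesis
    using lattice_add lattice_diff lat_rot_in_lattice z unfolding lattice_eq_range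
    by (metis rangeI)
qed

lemma triangular_centre_displacement_in_lattice:
  assumes "admissible_centre Triangular xh"
  shows "xh - lat_rot Triangular *v xh \<in> lattice Triangular"
proof -
  let ?Q = "\<lambda>y. lat_rot Triangular *v y" and ?E = "lattice_point Triangular"
  obtain a b c where abc: "a \<in> lattice Triangular" "b \<in> lattice Triangular" "c \<in> lattice Triangular"
    and sides: "dist a b = 1" "dist b c = 1" "dist a c = 1" and xh: "xh = (1/3) *\<^sub>R (a + b + c)"
    using assms unfolding admissible_centre_def by auto
  obtain \<alpha> \<beta> \<gamma> where coords: "a = ?E \<alpha>" "b = ?E \<beta>" "c = ?E \<gamma>"
    using abc unfolding lattice_eq_range by blast
  define e f where "e = \<alpha> - \<beta>" "f = \<alpha> - \<gamma>"
  have "a - b = ?E e" "a - c = ?E f" "c - b = ?E (e - f)"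
    unfolding e_f_def coords lattice_point_diff[symmetric] by (simp_all add: algebra_simps)
  moreover have "norm (c - b) = 1"
    using sides(2) by (metis dist_commute dist_norm)
  ultimately have "norm (?E e) = 1" "norm (?E f) = 1" "norm (?E (e - f)) = 1"
    using sides by (simp_all add: dist_norm)
  then have unit: "lattice_norm_form Triangular e = 1" "lattice_norm_form Triangular f = 1"
    "lattice_norm_form Triangular (e - f) = 1"
    by (simp_all only: lattice_point_norm_form_eq_1)
  define p q where "p = fst \<alpha> + fst \<beta> + fst \<gamma>" "q = snd \<alpha> + snd \<beta> + snd \<gamma>"
  have "3 dvd (fst e - snd e) + (fst f - snd f)"
    using unit unfolding lattice_norm_form_def by (intro unit_triangle_mod_3) simp_all
  moreover have "q - p = 3 * (snd \<alpha> - fst \<alpha>) + ((fst e - snd e) + (fst f - snd f))"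
    unfolding p_q_def e_f_def by simp
  ultimately obtain m where m: "q - p = 3 * m"
    by (metis dvd_add dvd_triv_left dvdE)
  have "a + b + c = ?E (p, q)"
    unfolding coords p_q_def lattice_point_add[symmetric]
    by (rule arg_cong[where f = ?E]) (simp add: prod_eq_iff)
  then have "(a + b + c) - ?Q (a + b + c) = ?E (3 * (p + m), 3 * m)"
    using lattice_point_minus_lat_rot[of Triangular p q] m by (simp add: algebra_simps)
  also have "\<dots> = 3 *\<^sub>R ?E (p + m, m)"
    using lattice_point_scale[of Triangular 3 "p + m" m] by simp
  finally have "xh - ?Q xh = ?E (p + m, m)"
    unfolding xh by (simp add: matrix_vector_mult_scaleR flip: scaleR_diff_right)
  then show ?thesis
    unfolding lattice_eq_range by simp
qed

lemma admissible_centre_displacement_in_lattice: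
  "admissible_centre k xh \<Longrightarrow> xh - lat_rot k *v xh \<in> lattice k"
  by (cases k) (simp_all add: square_centre_displacement_in_lattice triangular_centre_displacement_in_lattice)

lemma lat_L_eq: "lat_L k xh x = lat_rot k *v x + (xh - lat_rot k *v xh)"
  unfolding lat_L_def by (simp add: matrix_vector_mult_diff_distrib)

lemma lat_L_add: "lat_L k xh (x + y) = lat_L k xh x + lat_rot k *v y"
  unfolding lat_L_def by (simp add: matrix_vector_right_distrib algebra_simps)

lemma lat_L_diff: "lat_L k xh (x - y) = lat_L k xh x - lat_rot k *v y"
  unfolding lat_L_def by (simp add: matrix_vector_mult_diff_distrib algebra_simps)

lemma lat_L_in_lattice:
  "admissible_centre k xh \<Longrightarrow> x \<in> lattice k \<Longrightarrow> lat_L k xh x \<in> lattice k"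
  unfolding lat_L_eq
  by (intro lattice_add lat_rot_in_lattice admissible_centre_displacement_in_lattice)

lemma lat_L_funpow: "(lat_L k xh ^^ n) x = ((\<lambda>v. lat_rot k *v v) ^^ n) (x - xh) + xh"
  by (induction n) (simp_all add: lat_L_def)

lemma bij_betw_lat_L:
  assumes "admissible_centre k xh"
  shows "bij_betw (lat_L k xh) (lattice k) (lattice k)"
proof (rule bij_betw_if_funpow_eq_id)
  show "lat_L k xh ` lattice k \<subseteq> lattice k"
    using lat_L_in_lattice[OF assms] by blast
  show "lattice_order k > 0"
    by (cases k) (simp_all add: lattice_order_def)
  show "(lat_L k xh ^^ lattice_order k) x = x" for x
    by (simp add: lat_L_funpow lat_rot_funpow_order)
qed

lemma frechet_derivative_compose_linear:
  fixes g :: "'a::real_normed_vector \<Rightarrow> real" and P :: "'b::real_normed_vector \<Rightarrow> 'a"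
  assumes "g differentiable (at (P A))" "bounded_linear P"
  shows "frechet_derivative (\<lambda>B. g (P B)) (at A) v = frechet_derivative g (at (P A)) (P v)"
proof -
  have "((\<lambda>B. g (P B)) has_derivative (\<lambda>v. frechet_derivative g (at (P A)) (P v))) (at A)"
    using has_derivative_compose[OF bounded_linear_imp_has_derivative[OF assms(2)]]
      frechet_derivative_works assms(1) by blast
  then show ?thesis
    by (metis frechet_derivative_at)
qed

lemma C_k_Suc_Suc_differentiable:
  assumes "C_k (Suc (Suc n)) V"
  shows "V differentiable (at A)" "(\<lambda>B. frechet_derivative V (at B) v) differentiable (at A)"
  using assms unfolding C_k.simps(2) differentiable_on_def by auto

lemma hess0_permute:
  fixes V :: "real^'r::finite \<Rightarrow> real" and \<pi> :: "'r \<Rightarrow> 'r"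
  assumes V: "C_k (Suc (Suc n)) V" and "bij \<pi>" and sym: "\<And>A. V A = V (\<chi> r. A $ \<pi> r)"
  shows "hess0 V (\<pi> r) (\<pi> s) = hess0 V r s"
proof -
  define P where "P A = (\<chi> r. A $ \<pi> r)" for A :: "real^'r"
  have "linear P"
    unfolding P_def by (rule linearI) (simp_all add: vec_eq_iff)
  then have P: "bounded_linear P"
    using linear_conv_bounded_linear by blast
  have P_0: "P 0 = 0" and P_axis: "P (axis s 1) = axis (inv \<pi> s) 1" for s
    unfolding P_def axis_def using \<open>bij \<pi>\<close> by (auto simp: vec_eq_iff bij_inv_eq_iff)
  have V_P: "(\<lambda>B. V (P B)) = V"
    unfolding P_def using sym by simp
  have grad: "frechet_derivative V (at A) v = frechet_derivative V (at (P A)) (P v)" for A v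
    using frechet_derivative_compose_linear[OF C_k_Suc_Suc_differentiable(1)[OF V] P]
    unfolding V_P .
  have "(\<lambda>A. frechet_derivative V (at A) (axis s 1))
      = (\<lambda>A. frechet_derivative V (at (P A)) (axis (inv \<pi> s) 1))" for s
    using grad[of _ "axis s 1"] unfolding P_axis by (rule ext)
  then have "hess0 V r s = frechet_derivative (\<lambda>A. frechet_derivative V (at (P A)) (axis (inv \<pi> s) 1)) (at 0) (axis r 1)" for r s
    unfolding hess0_def by simp
  also have "\<dots> r s = hess0 V (inv \<pi> r) (inv \<pi> s)" for r s
    unfolding hess0_def
    by (subst frechet_derivative_compose_linear[OF C_k_Suc_Suc_differentiable(2)[OF V] P])
       (simp add: P_0 P_axis)
  finally have "hess0 V (\<pi> r) (\<pi> s) = hess0 V (inv \<pi> (\<pi> r)) (inv \<pi> (\<pi> s))" .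
  then show ?thesis
    using \<open>bij \<pi>\<close> by (simp add: bij_is_inj)
qed

definition lin_stress :: "(real^'r::finite \<Rightarrow> real) \<Rightarrow> ('r \<Rightarrow> real^2) \<Rightarrow> (real^2 \<Rightarrow> real)
    \<Rightarrow> 'r \<Rightarrow> real^2 \<Rightarrow> real" where
  "lin_stress V \<rho> u r y = (\<Sum>s\<in>UNIV. hess0 V r s * Dfd u (\<rho> s) y)"

lemma force_eq_stress_divergence:
  "force V \<rho> u x = (\<Sum>r\<in>UNIV. lin_stress V \<rho> u r (x - \<rho> r) - lin_stress V \<rho> u r x)"
  unfolding force_def divR_def lin_stress_def by simp

lemma force_lat_L_invariant:
  fixes \<rho> :: "'r::finite \<Rightarrow> real^2" and \<pi> :: "'r \<Rightarrow> 'r"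
  assumes "bij \<pi>" and \<rho>_\<pi>: "\<And>r. \<rho> (\<pi> r) = lat_rot k *v \<rho> r"
    and hess: "\<And>r s. hess0 V (\<pi> r) (\<pi> s) = hess0 V r s"
    and \<rho>_lattice: "\<And>r. \<rho> r \<in> lattice k" and xh: "admissible_centre k xh"
    and u_sym: "\<And>x. x \<in> lattice k \<Longrightarrow> u (lat_L k xh x) = u x"
    and x: "x \<in> lattice k"
  shows "force V \<rho> u (lat_L k xh x) = force V \<rho> u x"
proof -
  let ?L = "lat_L k xh" and ?G = "lin_stress V \<rho> u"
  have stress: "?G (\<pi> r) (?L y) = ?G r y" if y: "y \<in> lattice k" for r y
  proof -
    have diff: "Dfd u (\<rho> (\<pi> s)) (?L y) = Dfd u (\<rho> s) y" for s
      using u_sym[OF y] u_sym[OF lattice_add[OF y \<rho>_lattice]]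
      unfolding Dfd_def \<rho>_\<pi> lat_L_add by simp
    have "?G (\<pi> r) (?L y) = (\<Sum>s\<in>UNIV. hess0 V (\<pi> r) (\<pi> s) * Dfd u (\<rho> (\<pi> s)) (?L y))"
      unfolding lin_stress_def by (rule sum.reindex_bij_betw[OF \<open>bij \<pi>\<close>, symmetric])
    then show ?thesis
      unfolding hess diff lin_stress_def .
  qed
  have "force V \<rho> u (?L x) = (\<Sum>r\<in>UNIV. ?G (\<pi> r) (?L x - \<rho> (\<pi> r)) - ?G (\<pi> r) (?L x))"
    unfolding force_eq_stress_divergence by (rule sum.reindex_bij_betw[OF \<open>bij \<pi>\<close>, symmetric])
  also have "\<dots> = (\<Sum>r\<in>UNIV. ?G r (x - \<rho> r) - ?G r x)"
    unfolding \<rho>_\<pi> lat_L_diff[symmetric]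
    using stress[OF lattice_diff[OF x \<rho>_lattice]] stress[OF x] by simp
  finally show ?thesis
    unfolding force_eq_stress_divergence .
qed

lemma summable_on_norm_scaleR_le:
  fixes f :: "'a \<Rightarrow> real" and g :: "'a \<Rightarrow> 'b::real_normed_vector" and h :: "'a \<Rightarrow> 'c::real_normed_vector"
  assumes "(\<lambda>x. norm (f x *\<^sub>R g x)) summable_on A" "\<And>x. x \<in> A - {a} \<Longrightarrow> norm (h x) \<le> norm (g x)"
  shows "(\<lambda>x. norm (f x *\<^sub>R h x)) summable_on A"
proof (rule summable_on_insert_point[of _ A a])
  show "(\<lambda>x. norm (f x *\<^sub>R h x)) summable_on (A - {a})"
  proof (rule summable_on_comparison_test)
    show "(\<lambda>x. norm (f x *\<^sub>R g x)) summable_on (A - {a})"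
      using assms(1) by (rule summable_on_subset) auto
    show "norm (f x *\<^sub>R h x) \<le> norm (f x *\<^sub>R g x)" if "x \<in> A - {a}" for x
      using assms(2)[OF that] by (simp add: mult_left_mono)
  qed simp
qed

lemma outer_zero [simp]: "outer 0 y = 0" "outer x 0 = 0"
  by (simp_all add: outer_def vec_eq_iff)

lemma outer_add_left: "outer (x + y) z = outer x z + outer y z"
  by (simp add: outer_def vec_eq_iff algebra_simps)

lemma outer_add_right: "outer x (y + z) = outer x y + outer x z"
  by (simp add: outer_def vec_eq_iff algebra_simps)

lemma outer_scaleR_left: "outer (c *\<^sub>R x) y = c *\<^sub>R outer x y"
  by (simp add: outer_def vec_eq_iff)

lemma outer_scaleR_right: "outer x (c *\<^sub>R y) = c *\<^sub>R outer x y"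
  by (simp add: outer_def vec_eq_iff algebra_simps)

lemma matrix_mult_outer: "A ** outer x y = outer (A *v x) y"
  by (simp add: outer_def vec_eq_iff matrix_matrix_mult_def matrix_vector_mult_def sum_distrib_right
      mult.assoc)

lemma outer_mult_transpose: "outer x y ** transpose B = outer x (B *v y)"
  by (simp add: outer_def vec_eq_iff matrix_matrix_mult_def matrix_vector_mult_def transpose_def
      sum_distrib_left mult.assoc mult.commute[of "y $ _"])

lemma outer_matrix_vector_mult: "outer (A *v x) (B *v y) = A ** outer x y ** transpose B"
  by (simp add: matrix_mult_outer outer_mult_transpose)

lemma bounded_linear_outer_left: "bounded_linear (\<lambda>x. outer x y)"
  using outer_add_left outer_scaleR_left by (intro linear_conv_bounded_linear[THEN iffD1] linearI) auto

lemma bounded_linear_outer_right: "bounded_linear (outer x)"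
  using outer_add_right outer_scaleR_right by (intro linear_conv_bounded_linear[THEN iffD1] linearI) auto

lemma matrix_add_rdistrib: "(A + B) ** C = A ** C + B ** C"
  by (vector matrix_matrix_mult_def sum.distrib[symmetric] field_simps)

lemma matrix_mult_scaleR_left: "(c *\<^sub>R A) ** B = c *\<^sub>R (A ** B :: real^'n^'m)"
  by (vector matrix_matrix_mult_def sum_distrib_left mult.assoc)

lemma matrix_mult_scaleR_right: "A ** (c *\<^sub>R B) = c *\<^sub>R (A ** B :: real^'n^'m)"
  by (vector matrix_matrix_mult_def sum_distrib_left mult.left_commute)

lemma bounded_linear_matrix_conj: "bounded_linear (\<lambda>X :: real^'n^'n. A ** X ** B)"
  by (intro linear_conv_bounded_linear[THEN iffD1] linearI)
     (simp_all add: matrix_add_ldistrib matrix_add_rdistrib matrix_mult_scaleR_left matrix_mult_scaleR_right)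

lemma norm_outer: "norm (outer x y) = norm x * norm y"
proof -
  have "(norm (outer x y))\<^sup>2 = (\<Sum>i\<in>UNIV. \<Sum>j\<in>UNIV. (x $ i)\<^sup>2 * (y $ j)\<^sup>2)"
    unfolding power2_norm_eq_inner by (simp add: inner_vec_def outer_def power2_eq_square algebra_simps)
  also have "\<dots> = (\<Sum>i\<in>UNIV. (x $ i)\<^sup>2) * (\<Sum>j\<in>UNIV. (y $ j)\<^sup>2)"
    by (simp add: sum_product)
  also have "\<dots> = (norm x * norm y)\<^sup>2"
    unfolding power_mult_distrib power2_norm_eq_inner by (simp add: inner_vec_def power2_eq_square)
  finally show ?thesis
    by (simp add: power2_eq_iff_nonneg)
qed

lemma first_moment_eq_0:
  fixes f :: "real^2 \<Rightarrow> real"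
  assumes L: "bij_betw L \<Lambda> \<Lambda>" "\<And>x. L x = rot \<theta> *v x + t" and f_L: "\<And>x. x \<in> \<Lambda> \<Longrightarrow> f (L x) = f x"
    and "sin \<theta> \<noteq> 0" and f: "(f has_sum 0) \<Lambda>" and m: "(\<lambda>x. f x *\<^sub>R x) summable_on \<Lambda>"
  shows "(\<Sum>\<^sub>\<infinity>x\<in>\<Lambda>. f x *\<^sub>R x) = 0"
proof -
  define m where "m = (\<Sum>\<^sub>\<infinity>x\<in>\<Lambda>. f x *\<^sub>R x)"
  have "((\<lambda>x. f (L x) *\<^sub>R L x) has_sum m) \<Lambda>"
    using has_sum_reindex_bij_betw[OF L(1), of "\<lambda>x. f x *\<^sub>R x"] m by (simp add: m_def)
  moreover have "((\<lambda>x. rot \<theta> *v (f x *\<^sub>R x) + f x *\<^sub>R t) has_sum (rot \<theta> *v m + 0 *\<^sub>R t)) \<Lambda>"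
    using m f unfolding m_def
    by (intro has_sum_add has_sum_bounded_linear[where h = "\<lambda>v. rot \<theta> *v v"]
        has_sum_bounded_linear[where h = "\<lambda>c. c *\<^sub>R t"] bounded_linear_scaleR_left) auto
  then have "((\<lambda>x. f (L x) *\<^sub>R L x) has_sum rot \<theta> *v m) \<Lambda>"
    by (subst has_sum_cong[where g = "\<lambda>x. rot \<theta> *v (f x *\<^sub>R x) + f x *\<^sub>R t"])
       (simp_all add: f_L[unfolded L(2)] L(2) matrix_vector_mult_scaleR scaleR_right_distrib)
  ultimately have "rot \<theta> *v m = m"
    using has_sum_unique by blast
  then show ?thesis
    using rot_eq_self_imp_0 \<open>sin \<theta> \<noteq> 0\<close> m_def by blast
qed

lemma outer_affine:
  "outer (A *v x + t) (A *v x + t)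
     = A ** outer x x ** transpose A + outer (A *v x) t + outer t (A *v x) + outer t t"
  by (simp add: outer_add_left outer_add_right outer_matrix_vector_mult[symmetric])

lemma second_moment_scalar:
  fixes f :: "real^2 \<Rightarrow> real"
  assumes L: "bij_betw L \<Lambda> \<Lambda>" "\<And>x. L x = rot \<theta> *v x + t" and f_L: "\<And>x. x \<in> \<Lambda> \<Longrightarrow> f (L x) = f x"
    and "sin \<theta> \<noteq> 0" and f: "(f has_sum 0) \<Lambda>" and m: "((\<lambda>x. f x *\<^sub>R x) has_sum 0) \<Lambda>"
    and M: "(\<lambda>x. f x *\<^sub>R outer x x) summable_on \<Lambda>"
  shows "\<exists>c. (\<Sum>\<^sub>\<infinity>x\<in>\<Lambda>. f x *\<^sub>R outer x x) = c *\<^sub>R mat 1"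
proof -
  let ?R = "rot \<theta>"
  define M where "M = (\<Sum>\<^sub>\<infinity>x\<in>\<Lambda>. f x *\<^sub>R outer x x)"
  have M_sum: "((\<lambda>x. f x *\<^sub>R outer x x) has_sum M) \<Lambda>"
    using M by (simp add: M_def)
  have "((\<lambda>x. f (L x) *\<^sub>R outer (L x) (L x)) has_sum M) \<Lambda>"
    using has_sum_reindex_bij_betw[OF L(1), of "\<lambda>x. f x *\<^sub>R outer x x"] M_sum by simp
  moreover have "((\<lambda>x. ?R ** (f x *\<^sub>R outer x x) ** transpose ?R + outer (?R *v (f x *\<^sub>R x)) t
        + outer t (?R *v (f x *\<^sub>R x)) + f x *\<^sub>R outer t t)
      has_sum (?R ** M ** transpose ?R + outer (?R *v 0) t + outer t (?R *v 0) + 0 *\<^sub>R outer t t)) \<Lambda>"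
    by (intro has_sum_add has_sum_bounded_linear[OF bounded_linear_matrix_conj M_sum]
        has_sum_bounded_linear[where h = "\<lambda>v. outer (?R *v v) t", OF _ m]
        has_sum_bounded_linear[where h = "\<lambda>v. outer t (?R *v v)", OF _ m]
        has_sum_bounded_linear[where h = "\<lambda>c. c *\<^sub>R outer t t", OF _ f]
        bounded_linear_compose[OF bounded_linear_outer_left matrix_vector_mul_bounded_linear]
        bounded_linear_compose[OF bounded_linear_outer_right matrix_vector_mul_bounded_linear]
        bounded_linear_scaleR_left)
  then have "((\<lambda>x. f (L x) *\<^sub>R outer (L x) (L x)) has_sum ?R ** M ** transpose ?R) \<Lambda>"
    by (subst has_sum_cong) (simp_all add: f_L[unfolded L(2)] L(2) outer_affine matrix_vector_mult_scaleR
        outer_scaleR_left outer_scaleR_right matrix_mult_scaleR_left matrix_mult_scaleR_right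
        scaleR_right_distrib)
  ultimately have "?R ** M ** transpose ?R = M"
    using has_sum_unique by blast
  moreover have "M $ 2 $ 1 = M $ 1 $ 2"
  proof -
    have entry: "bounded_linear (\<lambda>X :: real^2^2. X $ i $ j)" for i j
      using bounded_linear_compose[OF bounded_linear_vec_nth[of j] bounded_linear_vec_nth[of i]] by simp
    have "((\<lambda>x. (f x *\<^sub>R outer x x) $ 2 $ 1) has_sum M $ 2 $ 1) \<Lambda>"
      "((\<lambda>x. (f x *\<^sub>R outer x x) $ 1 $ 2) has_sum M $ 1 $ 2) \<Lambda>"
      by (rule has_sum_bounded_linear[OF entry M_sum])+
    then show ?thesis
      by (simp add: outer_def mult.commute has_sum_unique)
  qed
  ultimately show ?thesis
    using rot_conj_eq_self_imp_scalar[OF \<open>sin \<theta> \<noteq> 0\<close>] M_def by blast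
qed

lemma infsum_force_eq_0:
  fixes \<rho> :: "'r::finite \<Rightarrow> real^2"
  assumes \<rho>_lattice: "\<And>r. \<rho> r \<in> lattice k" and u: "in_H1 (lattice k) \<rho> u"
    and F1: "(\<lambda>x. norm (force V \<rho> u x)) summable_on lattice k"
  shows "(\<Sum>\<^sub>\<infinity>x\<in>lattice k. force V \<rho> u x) = 0"
proof -
  let ?E = "lattice_point k" and ?G = "lin_stress V \<rho> u"
  have E: "inj_on ?E UNIV" "lattice k = ?E ` UNIV"
    using inj_lattice_point lattice_eq_range by auto
  define w where "w r = inv ?E (\<rho> r)" for r
  have E_w: "?E (w r) = \<rho> r" for r
    unfolding w_def using \<rho>_lattice lattice_eq_range by (metis f_inv_into_f)
  have "(\<lambda>x. (?G r x)\<^sup>2) summable_on lattice k" for r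
    unfolding lin_stress_def using u unfolding in_H1_def by (intro summable_on_sum_squares) auto
  then have G2: "(\<lambda>z. (?G r (?E z))\<^sup>2) summable_on UNIV" for r
    using summable_on_reindex[OF E(1), of "\<lambda>x. (?G r x)\<^sup>2"] E(2) by (simp add: o_def)
  have "(\<lambda>z. norm (force V \<rho> u (?E z))) summable_on UNIV"
    using F1 summable_on_reindex[OF E(1), of "\<lambda>x. norm (force V \<rho> u x)"] E(2) by (simp add: o_def)
  moreover have "force V \<rho> u (?E z) = (\<Sum>r\<in>UNIV. ?G r (?E (z - w r)) - ?G r (?E z))" for z
    by (simp add: force_eq_stress_divergence lattice_point_diff E_w)
  ultimately have "(\<Sum>\<^sub>\<infinity>z. force V \<rho> u (?E z)) = 0"
    using infsum_discrete_divergence_eq_0[OF G2] by simp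
  then show ?thesis
    using infsum_reindex[OF E(1), of "force V \<rho> u"] E(2) by (simp add: o_def)
qed

lemma bond_permutation:
  fixes \<rho> :: "'r::finite \<Rightarrow> real^2"
  assumes "inj \<rho>" and R_rot: "(\<lambda>y. lat_rot k *v y) ` range \<rho> = range \<rho>"
  defines "\<pi> \<equiv> \<lambda>r. inv \<rho> (lat_rot k *v \<rho> r)"
  shows "bij \<pi>" "\<rho> (\<pi> r) = lat_rot k *v \<rho> r"
proof -
  have \<rho>_\<pi>: "\<rho> (\<pi> r) = lat_rot k *v \<rho> r" for r
    unfolding \<pi>_def using R_rot by (metis f_inv_into_f image_eqI rangeI)
  then show "\<rho> (\<pi> r) = lat_rot k *v \<rho> r" .
  have "inj \<pi>"
  proof (rule injI)
    fix r r'
    assume "\<pi> r = \<pi> r'"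
    then have "lat_rot k *v \<rho> r = lat_rot k *v \<rho> r'"
      by (simp flip: \<rho>_\<pi>)
    then have "\<rho> r = \<rho> r'"
      using injD[OF bij_is_inj[OF bij_lat_rot]] by blast
    then show "r = r'"
      using injD[OF \<open>inj \<rho>\<close>] by blast
  qed
  then show "bij \<pi>"
    by (simp add: bij_def finite_UNIV_inj_surj)
qed

lemma abs_summable_of_first_moment:
  fixes f :: "'a::real_normed_vector \<Rightarrow> real"
  assumes "\<And>x. x \<in> A - {0} \<Longrightarrow> 1 \<le> norm x" "(\<lambda>x. norm (f x *\<^sub>R x)) summable_on A"
  shows "(\<lambda>x. norm (f x)) summable_on A"
  using summable_on_norm_scaleR_le[OF assms(2), where a = 0 and h = "\<lambda>_. 1::real"] assms(1) by simp

lemma abs_summable_first_moment_of_second: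
  fixes f :: "real^2 \<Rightarrow> real"
  assumes "\<And>x. x \<in> A - {0} \<Longrightarrow> 1 \<le> norm x" "(\<lambda>x. norm (f x *\<^sub>R outer x x)) summable_on A"
  shows "(\<lambda>x. norm (f x *\<^sub>R x)) summable_on A"
proof (rule summable_on_norm_scaleR_le[OF assms(2), where a = 0])
  fix x
  assume "x \<in> A - {0}"
  then have "norm x * 1 \<le> norm x * norm x"
    using assms(1) by (intro mult_left_mono) auto
  then show "norm x \<le> norm (outer x x)"
    by (simp add: norm_outer)
qed

lemma invariant_moments:
  fixes f :: "real^2 \<Rightarrow> real"
  assumes L: "bij_betw L \<Lambda> \<Lambda>" "\<And>x. L x = rot \<theta> *v x + t" and f_L: "\<And>x. x \<in> \<Lambda> \<Longrightarrow> f (L x) = f x"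
    and \<theta>: "sin \<theta> \<noteq> 0" and large: "\<And>x. x \<in> \<Lambda> - {0} \<Longrightarrow> 1 \<le> norm x"
    and zero: "(\<lambda>x. norm (f x)) summable_on \<Lambda> \<Longrightarrow> (\<Sum>\<^sub>\<infinity>x\<in>\<Lambda>. f x) = 0"
  shows "(\<lambda>x. norm (f x *\<^sub>R x)) summable_on \<Lambda> \<Longrightarrow> (\<Sum>\<^sub>\<infinity>x\<in>\<Lambda>. f x *\<^sub>R x) = 0"
    and "(\<lambda>x. norm (f x *\<^sub>R outer x x)) summable_on \<Lambda> \<Longrightarrow> \<exists>c. (\<Sum>\<^sub>\<infinity>x\<in>\<Lambda>. f x *\<^sub>R outer x x) = c *\<^sub>R mat 1"
proof -
  have sum0: "(f has_sum 0) \<Lambda>" if "(\<lambda>x. norm (f x)) summable_on \<Lambda>"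
    using has_sum_infsum[OF abs_summable_summable[OF that]] zero[OF that] by simp
  have sum1: "((\<lambda>x. f x *\<^sub>R x) has_sum 0) \<Lambda>" if "(\<lambda>x. norm (f x *\<^sub>R x)) summable_on \<Lambda>"
  proof -
    have "(\<lambda>x. f x *\<^sub>R x) summable_on \<Lambda>"
      using that by (rule abs_summable_summable)
    moreover have "(\<Sum>\<^sub>\<infinity>x\<in>\<Lambda>. f x *\<^sub>R x) = 0"
      using first_moment_eq_0[OF L f_L \<theta> sum0[OF abs_summable_of_first_moment[OF large that]]]
        calculation by simp
    ultimately show ?thesis
      using has_sum_infsum by fastforce
  qed
  show "(\<lambda>x. norm (f x *\<^sub>R x)) summable_on \<Lambda> \<Longrightarrow> (\<Sum>\<^sub>\<infinity>x\<in>\<Lambda>. f x *\<^sub>R x) = 0"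
    using sum1 infsumI by blast
  show "\<exists>c. (\<Sum>\<^sub>\<infinity>x\<in>\<Lambda>. f x *\<^sub>R outer x x) = c *\<^sub>R mat 1"
    if "(\<lambda>x. norm (f x *\<^sub>R outer x x)) summable_on \<Lambda>"
  proof -
    have first: "(\<lambda>x. norm (f x *\<^sub>R x)) summable_on \<Lambda>"
      using abs_summable_first_moment_of_second[OF large that] by simp
    show ?thesis
      using second_moment_scalar[OF L f_L \<theta> sum0[OF abs_summable_of_first_moment[OF large first]]
          sum1[OF first] abs_summable_summable[OF that]] by simp
  qed
qed

theorem theorem5p9:
  fixes k :: lattice_kind
    and xh :: "real^2"
    and \<rho> :: "'r::finite \<Rightarrow> real^2"
    and V :: "real^'r \<Rightarrow> real"
    and p :: real
    and u :: "real^2 \<Rightarrow> real"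
  assumes xh: "admissible_centre k xh"
    and rho_inj: "inj \<rho>"
    and R_sub: "range \<rho> \<subseteq> lattice k - {0}"
    and R_span: "lattice k = {y. \<exists>c :: 'r \<Rightarrow> int. y = (\<Sum>r\<in>UNIV. of_int (c r) *\<^sub>R \<rho> r)}"
    and R_rot: "(\<lambda>y. lat_rot k *v y) ` range \<rho> = range \<rho>"
    and V_C6: "C_k 6 V"
    and V_sym: "\<And>A. V A = V (\<chi> r. A $ (inv \<rho> (lat_rot k *v \<rho> r)))"
    and p_pos: "p > 0"
    and V_per: "\<And>A r. V (A + p *\<^sub>R axis r 1) = V A"
    and p_min: "\<And>r t. 0 < t \<Longrightarrow> t < p \<Longrightarrow> \<not> (\<forall>A. V (A + t *\<^sub>R axis r 1) = V A)"
    and V_stab: "lattice_stable (lattice k) \<rho> V"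
    and u_H1: "in_H1 (lattice k) \<rho> u"
    and u_sym: "\<And>x. x \<in> lattice k \<Longrightarrow> u (lat_L k xh x) = u x"
  shows "((\<lambda>x. norm (force V \<rho> u x)) summable_on lattice k \<longrightarrow>
            (\<Sum>\<^sub>\<infinity>x\<in>lattice k. force V \<rho> u x) = 0)
       \<and> ((\<lambda>x. norm (force V \<rho> u x *\<^sub>R x)) summable_on lattice k \<longrightarrow>
            (\<Sum>\<^sub>\<infinity>x\<in>lattice k. force V \<rho> u x *\<^sub>R x) = 0)
       \<and> ((\<lambda>x. norm (force V \<rho> u x *\<^sub>R outer x x)) summable_on lattice k \<longrightarrow>
            (\<exists>c::real. (\<Sum>\<^sub>\<infinity>x\<in>lattice k. force V \<rho> u x *\<^sub>R outer x x) = c *\<^sub>R mat 1))"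
proof -
  let ?\<Lambda> = "lattice k" and ?f = "force V \<rho> u" and ?\<theta> = "2 * pi / lattice_order k"
  define \<pi> where "\<pi> r = inv \<rho> (lat_rot k *v \<rho> r)" for r
  have \<pi>: "bij \<pi>" "\<And>r. \<rho> (\<pi> r) = lat_rot k *v \<rho> r"
    using bond_permutation[OF rho_inj R_rot] unfolding \<pi>_def by auto
  have "C_k (Suc (Suc 4)) V" "\<And>A. V A = V (\<chi> r. A $ \<pi> r)"
    using V_C6 V_sym by (simp_all add: numeral_eq_Suc \<pi>_def)
  then have hess: "hess0 V (\<pi> r) (\<pi> s) = hess0 V r s" for r s
    using hess0_permute \<pi>(1) by blast
  have \<rho>_lattice: "\<rho> r \<in> ?\<Lambda>" for r
    using R_sub by auto
  have f_L: "?f (lat_L k xh x) = ?f x" if "x \<in> ?\<Lambda>" for x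
    by (rule force_lat_L_invariant[where V = V and \<rho> = \<rho> and u = u, OF \<pi> hess \<rho>_lattice xh u_sym that])
  have L: "bij_betw (lat_L k xh) ?\<Lambda> ?\<Lambda>" "lat_L k xh x = rot ?\<theta> *v x + (xh - lat_rot k *v xh)" for x
    using bij_betw_lat_L[OF xh] lat_L_eq lat_rot_eq_rot by auto
  have "x \<in> ?\<Lambda> - {0} \<Longrightarrow> 1 \<le> norm x" for x
    using norm_ge_1_if_in_lattice by blast
  note moments = invariant_moments[where f = ?f, OF L f_L sin_lattice_angle_neq_0 this
      infsum_force_eq_0[OF \<rho>_lattice u_H1]]
  show ?thesis
    using infsum_force_eq_0[OF \<rho>_lattice u_H1] moments by blast
qed

end
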